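(* Let $\sigma:\mathbb{R}\to\mathbb{R}$ be either a continuous and strictly monotonic function or the ReLU function $\sigma(t)=\max\{t,0\}$. Then for all input and output dimensions $d_{in},d_{out}$, $d_{in}<\omega_{\min}(\sigma,d_{in},d_{out})$.
   Context: A neural network function $F:\mathbb{R}^{d_{in}}\to\mathbb{R}^{d_{out}}$ with $L$ layers and activation $\sigma$ has the form $F=W_L\circ A_{L-1}\circ\dots\circ A_1$, where $A_j(x)=\sigma(W_jx+b_j)$ with $W_j\in\mathbb{R}^{d_j\times d_{j-1}}$, $b_j\in\mathbb{R}^{d_j}$, $d_0=d_{in}$, $d_L=d_{out}$, and $\sigma$ applied componentwise. Its width is $\omega_F=\max\{d_j:j=1,\dots,L\}$. For $f:D\to\mathbb{R}^m$ write $\|f\|_D=\sup\{\|f(x)\|:x\in D\}$ (Euclidean norm). Fix real numbers $a<b$. $\omega_{\min}(\sigma,d_{in},d_{out})$ denotes the minimum width $\omega$ such that for every continuous $f:[a,b]^{d_{in}}\to\mathbb{R}^{d_{out}}$ and every $\varepsilon>0$ there exists a neural network function $F:\mathbb{R}^{d_{in}}\to\mathbb{R}^{d_{out}}$ with activation $\sigma$ and $\omega_F\le\omega$ such that $\|f-F\|_{[a,b]^{d_{in}}}<\varepsilon$. *)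

theory Defs
  imports "HOL-Analysis.Analysis" "HOL-Library.Extended_Nat"
begin

text \<open>Vectors in R^d are represented as functions nat => real; only the
  components with index < d are meaningful.  A network is given by its list of
  layer dimensions ds = [d_0, ..., d_L] (L = length ds - 1 >= 1), weights
  W j i k (entry (i,k) of W_j) and biases b j i (entry i of b_j).\<close>

fun nn_hidden :: "(real \<Rightarrow> real) \<Rightarrow> nat list \<Rightarrow> (nat \<Rightarrow> nat \<Rightarrow> nat \<Rightarrow> real)
    \<Rightarrow> (nat \<Rightarrow> nat \<Rightarrow> real) \<Rightarrow> (nat \<Rightarrow> real) \<Rightarrow> nat \<Rightarrow> (nat \<Rightarrow> real)" where
  "nn_hidden \<sigma> ds W b x 0 = x"
| "nn_hidden \<sigma> ds W b x (Suc j) =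
     (\<lambda>i. if i < ds ! Suc j
          then \<sigma> ((\<Sum>k<ds ! j. W (Suc j) i k * nn_hidden \<sigma> ds W b x j k) + b (Suc j) i)
          else 0)"

definition nn_eval :: "(real \<Rightarrow> real) \<Rightarrow> nat list \<Rightarrow> (nat \<Rightarrow> nat \<Rightarrow> nat \<Rightarrow> real)
    \<Rightarrow> (nat \<Rightarrow> nat \<Rightarrow> real) \<Rightarrow> (nat \<Rightarrow> real) \<Rightarrow> (nat \<Rightarrow> real)" where
  "nn_eval \<sigma> ds W b x =
     (let L = length ds - 1 in
      (\<lambda>i. if i < ds ! L
           then (\<Sum>k<ds ! (L - 1). W L i k * nn_hidden \<sigma> ds W b x (L - 1) k)
           else 0))"

definition is_nn_fun :: "(real \<Rightarrow> real) \<Rightarrow> nat \<Rightarrow> nat \<Rightarrow> nat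
    \<Rightarrow> ((nat \<Rightarrow> real) \<Rightarrow> (nat \<Rightarrow> real)) \<Rightarrow> bool" where
  "is_nn_fun \<sigma> din dout w F \<longleftrightarrow>
     (\<exists>ds W b. length ds \<ge> 2 \<and> ds ! 0 = din \<and> last ds = dout
        \<and> (\<forall>d\<in>set ds. 0 < d)
        \<and> Max (set (tl ds)) \<le> w
        \<and> F = nn_eval \<sigma> ds W b)"

definition cube :: "real \<Rightarrow> real \<Rightarrow> nat \<Rightarrow> (nat \<Rightarrow> real) set" where
  "cube a b din = {x. (\<forall>i<din. a \<le> x i \<and> x i \<le> b) \<and> (\<forall>i\<ge>din. x i = 0)}"

definition vec_norm :: "nat \<Rightarrow> (nat \<Rightarrow> real) \<Rightarrow> real" where
  "vec_norm d v = sqrt (\<Sum>i<d. (v i)\<^sup>2)"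

definition approx_width :: "(real \<Rightarrow> real) \<Rightarrow> real \<Rightarrow> real \<Rightarrow> nat \<Rightarrow> nat \<Rightarrow> nat \<Rightarrow> bool" where
  "approx_width \<sigma> a b din dout w \<longleftrightarrow>
     (\<forall>f. (\<forall>i<dout. continuous_on (cube a b din) (\<lambda>x. f x i)) \<longrightarrow>
        (\<forall>\<epsilon>>0. \<exists>F. is_nn_fun \<sigma> din dout w F \<and>
            (SUP x\<in>cube a b din. vec_norm dout (\<lambda>i. f x i - F x i)) < \<epsilon>))"

text \<open>Minimal width; it is \<infinity> if no finite width suffices.\<close>
definition omega_min :: "(real \<Rightarrow> real) \<Rightarrow> real \<Rightarrow> real \<Rightarrow> nat \<Rightarrow> nat \<Rightarrow> enat" where
  "omega_min \<sigma> a b din dout = Inf {enat w | w. approx_width \<sigma> a b din dout w}"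

end

(* A network whose hidden layers are at most d_in wide cannot approximate the bump
   prod_i (x_i - a) (b - x_i), which is positive at the centre of the cube and vanishes on its
   boundary, because the first output F at any point c of the cube is dominated by its value at
   some boundary point.

   For a continuous injective activation, let layer m + 1 be the first layer that is not an
   invertible d_in x d_in layer. The activation has a continuous inverse on its open range
   (invariance of domain on the real line), so layers 1..m map the open cube onto an open set.
   Starting at the image h(c) of c, follow a ray in a direction v that the weights of layer m + 1
   annihilate (or, if all hidden layers are invertible, a direction in which F does not decrease)
   up to its last point in the compact image of the cube. By openness this point is the image of
   a boundary point y, and F(y) >= F(c). For ReLU the same holds up to any positive slack, by
   uniform approximation on the cube with the injective leaky ReLUs max t (delta t). *)

theory Submission
  imports Defs "Jordan_Normal_Form.Determinant"
begin

unbundle no vec_syntax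

lemma nn_hidden_beyond_width:
  assumes "x \<in> cube a b (ds ! 0)" "ds ! k \<le> i"
  shows "nn_hidden \<sigma> ds W B x k i = 0"
  using assms by (cases k) (auto simp: cube_def)

lemma continuous_on_nn_hidden:
  assumes "continuous_on UNIV \<sigma>"
  shows "continuous_on UNIV (\<lambda>x. nn_hidden \<sigma> ds W B x k i)"
proof (induction k arbitrary: i)
  case (Suc k)
  show ?case
  proof (cases "i < ds ! Suc k")
    case True
    then show ?thesis
      by (simp, intro continuous_on_compose2[OF assms] continuous_intros Suc.IH) auto
  qed simp
qed simp

lemma continuous_on_nn_hidden_layer:
  assumes "continuous_on UNIV \<sigma>"
  shows "continuous_on S (\<lambda>x. nn_hidden \<sigma> ds W B x k)"
  by (intro continuous_on_coordinatewise_then_product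
      continuous_on_subset[OF continuous_on_nn_hidden[OF assms]]) auto

lemma continuous_on_nn_eval:
  assumes "continuous_on UNIV \<sigma>"
  shows "continuous_on S (\<lambda>x. nn_eval \<sigma> ds W B x i)"
proof -
  have "continuous_on UNIV (\<lambda>x. nn_eval \<sigma> ds W B x i)"
    unfolding nn_eval_def Let_def
    by (cases "i < ds ! (length ds - 1)") (auto intro!: continuous_intros continuous_on_nn_hidden[OF assms])
  then show ?thesis by (rule continuous_on_subset) simp
qed

lemma nn_hidden_agree_later:
  assumes "nn_hidden \<sigma> ds W B x j = nn_hidden \<sigma> ds W B y j" "j \<le> k"
  shows "nn_hidden \<sigma> ds W B x k = nn_hidden \<sigma> ds W B y k"
  using assms(2) by (induction k rule: dec_induct) (simp_all add: assms(1) fun_eq_iff)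

lemma nn_eval_first_output:
  assumes "0 < ds ! (length ds - 1)"
  shows "nn_eval \<sigma> ds W B x 0 =
    (\<Sum>k<ds ! (length ds - 2). W (length ds - 1) 0 k * nn_hidden \<sigma> ds W B x (length ds - 2) k)"
proof -
  have "length ds - 1 - 1 = length ds - 2" by simp
  then show ?thesis using assms by (simp add: nn_eval_def Let_def)
qed

definition cube_boundary :: "real \<Rightarrow> real \<Rightarrow> nat \<Rightarrow> (nat \<Rightarrow> real) set" where
  "cube_boundary a b n = {y \<in> cube a b n. \<exists>i<n. y i = a \<or> y i = b}"

lemma compact_cube: "compact (cube a b n)"
proof -
  have "cube a b n = PiE UNIV (\<lambda>i. if i < n then {a..b} else {0})"
    unfolding cube_def by (force simp: PiE_iff split: if_splits)
  moreover have "compactin (product_topology (\<lambda>i. euclidean) UNIV)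
      (PiE UNIV (\<lambda>i. if i < n then {a..b::real} else {0}))"
    by (subst compactin_PiE) (auto simp: compactin_euclidean_iff)
  ultimately show ?thesis
    by (simp add: euclidean_product_topology compactin_euclidean_iff)
qed

lemma eventually_all_lessThan:
  fixes n :: nat
  assumes "\<And>i. i < n \<Longrightarrow> eventually (\<lambda>s. P s i) F"
  shows "eventually (\<lambda>s. \<forall>i<n. P s i) F"
proof -
  from assms have "\<forall>i\<in>{..<n}. eventually (\<lambda>s. P s i) F" by blast
  from eventually_ball_finite[OF finite_lessThan this] show ?thesis by (simp add: Ball_def)
qed

lemma eventually_in_cube:
  assumes "\<forall>i<n. a < y i \<and> y i < b" "\<forall>i<n. ((\<lambda>s. X s i) \<longlongrightarrow> y i) F"
    and "\<forall>s i. n \<le> i \<longrightarrow> X s i = 0"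
  shows "\<forall>\<^sub>F s in F. X s \<in> cube a b n"
proof -
  have "\<forall>\<^sub>F s in F. \<forall>i<n. a < X s i \<and> X s i < b"
    using assms(1,2) by (intro eventually_all_lessThan eventually_conj order_tendstoD) auto
  then show ?thesis
    by eventually_elim (use assms(3) in \<open>auto simp: cube_def less_imp_le\<close>)
qed

section \<open>Invertible layers are locally surjective\<close>

definition inverse_matrices :: "nat \<Rightarrow> (nat \<Rightarrow> nat \<Rightarrow> real) \<Rightarrow> (nat \<Rightarrow> nat \<Rightarrow> real) \<Rightarrow> bool" where
  "inverse_matrices n P Q \<longleftrightarrow>
     (\<forall>i<n. \<forall>l<n. (\<Sum>t<n. P i t * Q t l) = (if i = l then 1 else 0)) \<and>
     (\<forall>i<n. \<forall>l<n. (\<Sum>t<n. Q i t * P t l) = (if i = l then 1 else 0))"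

lemma inverse_matrices_sym: "inverse_matrices n P Q \<Longrightarrow> inverse_matrices n Q P"
  unfolding inverse_matrices_def by blast

lemma inverse_matrices_apply:
  assumes "inverse_matrices n P Q" "i < n"
  shows "(\<Sum>l<n. P i l * (\<Sum>r<n. Q l r * h r)) = h i"
proof -
  have "(\<Sum>l<n. P i l * (\<Sum>r<n. Q l r * h r)) = (\<Sum>l<n. \<Sum>r<n. P i l * Q l r * h r)"
    by (simp add: sum_distrib_left mult.assoc)
  also have "\<dots> = (\<Sum>r<n. \<Sum>l<n. P i l * Q l r * h r)"
    by (rule sum.swap)
  also have "\<dots> = (\<Sum>r<n. (\<Sum>l<n. P i l * Q l r) * h r)"
    by (simp add: sum_distrib_right)
  also have "\<dots> = (\<Sum>r<n. if i = r then h r else 0)"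
    using assms unfolding inverse_matrices_def by (intro sum.cong) auto
  finally show ?thesis using assms(2) by simp
qed

definition padded_mat :: "nat \<Rightarrow> nat \<Rightarrow> (nat \<Rightarrow> nat \<Rightarrow> real) \<Rightarrow> real Matrix.mat" where
  "padded_mat n d P = Matrix.mat n n (\<lambda>(i, l). if i < d then P i l else 0)"

lemma padded_mat_carrier: "padded_mat n d P \<in> carrier_mat n n"
  unfolding padded_mat_def by simp

lemma det_padded_mat_eq_0:
  assumes "d < n"
  shows "Determinant.det (padded_mat n d P) = 0"
proof -
  \<comment> \<open>Row \<open>n - 1\<close> is zero, so multiplying it by \<open>0\<close> changes nothing.\<close>
  have "multrow (n - 1) 0 (padded_mat n d P) = padded_mat n d P"
    by (rule eq_matI) (use assms in \<open>auto simp: mat_multrow_gen_def padded_mat_def\<close>)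
  moreover have last_row: "n - 1 < n" using assms by simp
  ultimately show ?thesis
    using det_multrow[OF last_row padded_mat_carrier, of 0 d P] by simp
qed

lemma padded_mat_inverse:
  assumes "Determinant.det (padded_mat n n P) \<noteq> 0"
  shows "\<exists>Q. inverse_matrices n P Q"
proof -
  let ?A = "padded_mat n n P"
  have "?A \<in> Units (ring_mat TYPE(real) n ())"
    by (rule det_non_zero_imp_unit[OF padded_mat_carrier assms])
  then obtain M where M: "M \<in> carrier_mat n n" "?A * M = 1\<^sub>m n" "M * ?A = 1\<^sub>m n"
    unfolding Units_def ring_mat_def by auto
  have "(?A * M) $$ (i, l) = (\<Sum>t<n. P i t * M $$ (t, l))"
    "(M * ?A) $$ (i, l) = (\<Sum>t<n. M $$ (i, t) * P t l)" if "i < n" "l < n" for i l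
    using that M(1) by (simp_all add: padded_mat_def scalar_prod_def lessThan_atLeast0)
  then have "inverse_matrices n P (\<lambda>i l. M $$ (i, l))"
    using M(2,3) unfolding inverse_matrices_def by auto
  then show ?thesis by blast
qed

lemma padded_mat_kernel:
  assumes "Determinant.det (padded_mat n d P) = 0" "d \<le> n"
  shows "\<exists>v. (\<exists>i<n. v i \<noteq> 0) \<and> (\<forall>i<d. (\<Sum>l<n. P i l * v l) = 0)"
proof -
  obtain v where v: "v \<in> carrier_vec n" "v \<noteq> 0\<^sub>v n" "padded_mat n d P *\<^sub>v v = 0\<^sub>v n"
    using det_0_iff_vec_prod_zero[OF padded_mat_carrier] assms(1) by blast
  have "\<exists>i<n. v $ i \<noteq> 0"
    using v(1,2) by (metis carrier_vecD eq_vecI index_zero_vec)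
  moreover have "(\<Sum>l<n. P i l * v $ l) = 0" if "i < d" for i
  proof -
    have "(padded_mat n d P *\<^sub>v v) $ i = (\<Sum>l<n. P i l * v $ l)"
      using that assms(2) v(1) by (simp add: padded_mat_def scalar_prod_def lessThan_atLeast0)
    then show ?thesis using v(3) that assms(2) by simp
  qed
  ultimately show ?thesis by (intro exI[of _ "\<lambda>l. v $ l"]) auto
qed

lemma invertible_or_kernel:
  assumes "d \<le> n"
  shows "(d = n \<and> (\<exists>Q. inverse_matrices n P Q)) \<or>
    (\<exists>v. (\<exists>i<n. v i \<noteq> 0) \<and> (\<forall>i<d. (\<Sum>l<n. P i l * v l) = 0))"
  using assms padded_mat_kernel[of n d P] det_padded_mat_eq_0[of d n P] padded_mat_inverse[of n P]
  by (cases "Determinant.det (padded_mat n d P) = 0") (auto simp: le_less)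

lemma sum_mult_translate:
  fixes P h h' v :: "nat \<Rightarrow> real"
  assumes "\<forall>k<n. h' k = h k + s * v k"
  shows "(\<Sum>l<n. P l * h' l) = (\<Sum>l<n. P l * h l) + s * (\<Sum>l<n. P l * v l)"
proof -
  have "(\<Sum>l<n. P l * h' l) = (\<Sum>l<n. P l * h l + s * (P l * v l))"
    using assms by (intro sum.cong) (auto simp: algebra_simps)
  then show ?thesis by (simp add: sum.distrib sum_distrib_left)
qed

lemma open_range_continuous_inj:
  fixes \<sigma> :: "real \<Rightarrow> real"
  assumes "continuous_on UNIV \<sigma>" "inj \<sigma>"
  shows "open (range \<sigma>)"
  using invariance_of_domain[OF assms(1) open_UNIV] assms(2) by simp

lemma tendsto_inv_into_continuous_inj:
  fixes \<sigma> :: "real \<Rightarrow> real"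
  assumes cont: "continuous_on UNIV \<sigma>" and inj: "inj \<sigma>" and lim: "(g \<longlongrightarrow> \<sigma> t) F"
  shows "((\<lambda>s. inv_into UNIV \<sigma> (g s)) \<longlongrightarrow> t) F"
proof -
  have "continuous_on (range \<sigma>) (inv_into UNIV \<sigma>)"
    by (rule continuous_on_inverse_open[OF open_UNIV cont]) (auto simp: inj)
  then have "isCont (inv_into UNIV \<sigma>) (\<sigma> t)"
    using open_range_continuous_inj[OF cont inj] continuous_on_eq_continuous_at by blast
  from isCont_tendsto_compose[OF this lim] show ?thesis
    using inj by simp
qed

lemma layer_locally_surjective:
  fixes \<sigma> :: "real \<Rightarrow> real" and P Q :: "nat \<Rightarrow> nat \<Rightarrow> real"
  assumes cont: "continuous_on UNIV \<sigma>" and inj: "inj \<sigma>" and PQ: "inverse_matrices n P Q"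
    and lim: "\<forall>i<n. ((\<lambda>s. u s i) \<longlongrightarrow> \<sigma> ((\<Sum>k<n. P i k * h k) + c i)) F"
  obtains v where "\<forall>i<n. ((\<lambda>s. v s i) \<longlongrightarrow> h i) F"
    and "\<forall>\<^sub>F s in F. \<forall>i<n. \<sigma> ((\<Sum>k<n. P i k * v s k) + c i) = u s i"
proof -
  define v where "v s i = (\<Sum>l<n. Q i l * (inv_into UNIV \<sigma> (u s l) - c l))" for s i
  have "((\<lambda>s. v s i) \<longlongrightarrow> h i) F" if "i < n" for i
  proof -
    have "((\<lambda>s. v s i) \<longlongrightarrow> (\<Sum>l<n. Q i l * ((\<Sum>k<n. P l k * h k) + c l - c l))) F"
      unfolding v_def using lim
      by (intro tendsto_intros tendsto_inv_into_continuous_inj[OF cont inj]) auto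
    then show ?thesis
      using inverse_matrices_apply[OF inverse_matrices_sym[OF PQ] that] by simp
  qed
  moreover have "\<forall>\<^sub>F s in F. \<forall>l<n. u s l \<in> range \<sigma>"
    using lim by (intro eventually_all_lessThan
        topological_tendstoD[OF _ open_range_continuous_inj[OF cont inj] rangeI]) auto
  then have "\<forall>\<^sub>F s in F. \<forall>i<n. \<sigma> ((\<Sum>k<n. P i k * v s k) + c i) = u s i"
  proof eventually_elim
    case (elim s)
    have "(\<Sum>k<n. P i k * v s k) = inv_into UNIV \<sigma> (u s i) - c i" if "i < n" for i
      unfolding v_def by (rule inverse_matrices_apply[OF PQ that])
    then show ?case using elim by (simp add: f_inv_into_f)
  qed
  ultimately show ?thesis using that by blast
qed

lemma nn_hidden_locally_surjective:
  fixes \<sigma> :: "real \<Rightarrow> real"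
  assumes cont: "continuous_on UNIV \<sigma>" and inj: "inj \<sigma>"
    and "\<forall>k\<le>m. ds ! k = n" and "\<forall>k. 1 \<le> k \<longrightarrow> k \<le> m \<longrightarrow> inverse_matrices n (W k) (Q k)"
    and "\<forall>i<n. ((\<lambda>s. u s i) \<longlongrightarrow> nn_hidden \<sigma> ds W B y m i) F"
  shows "\<exists>X. (\<forall>i<n. ((\<lambda>s. X s i) \<longlongrightarrow> y i) F) \<and> (\<forall>s i. n \<le> i \<longrightarrow> X s i = 0) \<and>
    (\<forall>\<^sub>F s in F. \<forall>i<n. nn_hidden \<sigma> ds W B (X s) m i = u s i)"
  using assms(3-)
proof (induction m arbitrary: u)
  case 0
  show ?case by (rule exI[of _ "\<lambda>s i. if i < n then u s i else 0"]) (use "0.prems"(3) in auto)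
next
  case (Suc m)
  have dims: "ds ! m = n" "ds ! Suc m = n" using Suc.prems(1) by auto
  have "\<forall>i<n. ((\<lambda>s. u s i) \<longlongrightarrow>
      \<sigma> ((\<Sum>k<n. W (Suc m) i k * nn_hidden \<sigma> ds W B y m k) + B (Suc m) i)) F"
    using Suc.prems(3) dims by simp
  moreover have "inverse_matrices n (W (Suc m)) (Q (Suc m))" using Suc.prems(2) by simp
  ultimately obtain v where v_lim: "\<forall>i<n. ((\<lambda>s. v s i) \<longlongrightarrow> nn_hidden \<sigma> ds W B y m i) F"
    and v_eq: "\<forall>\<^sub>F s in F. \<forall>i<n. \<sigma> ((\<Sum>k<n. W (Suc m) i k * v s k) + B (Suc m) i) = u s i"
    using layer_locally_surjective[OF cont inj] by blast
  obtain X where X: "\<forall>i<n. ((\<lambda>s. X s i) \<longlongrightarrow> y i) F" "\<forall>s i. n \<le> i \<longrightarrow> X s i = 0"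
    and X_eq: "\<forall>\<^sub>F s in F. \<forall>i<n. nn_hidden \<sigma> ds W B (X s) m i = v s i"
    using Suc.IH[OF _ _ v_lim] Suc.prems(1,2) by auto
  have "\<forall>\<^sub>F s in F. \<forall>i<n. nn_hidden \<sigma> ds W B (X s) (Suc m) i = u s i"
    using X_eq v_eq
  proof eventually_elim
    case (elim s)
    then have "(\<Sum>k<n. W (Suc m) i k * nn_hidden \<sigma> ds W B (X s) m k) = (\<Sum>k<n. W (Suc m) i k * v s k)"
      for i by (intro sum.cong) auto
    then show ?case using elim dims by simp
  qed
  then show ?case using X by blast
qed

lemma eventually_in_nn_hidden_image:
  fixes \<sigma> :: "real \<Rightarrow> real"
  assumes cont: "continuous_on UNIV \<sigma>" and inj: "inj \<sigma>"
    and dims: "\<forall>k\<le>m. ds ! k = n" and inv: "\<forall>k. 1 \<le> k \<longrightarrow> k \<le> m \<longrightarrow> inverse_matrices n (W k) (Q k)"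
    and y: "\<forall>i<n. a < y i \<and> y i < b"
    and lim: "\<forall>i<n. ((\<lambda>s. u s i) \<longlongrightarrow> nn_hidden \<sigma> ds W B y m i) F"
    and u: "\<forall>s i. n \<le> i \<longrightarrow> u s i = 0"
  shows "\<forall>\<^sub>F s in F. u s \<in> (\<lambda>x. nn_hidden \<sigma> ds W B x m) ` cube a b n"
proof -
  have "ds ! 0 = n" "ds ! m = n" using dims by auto
  obtain X where X: "\<forall>i<n. ((\<lambda>s. X s i) \<longlongrightarrow> y i) F" "\<forall>s i. n \<le> i \<longrightarrow> X s i = 0"
    and X_eq: "\<forall>\<^sub>F s in F. \<forall>i<n. nn_hidden \<sigma> ds W B (X s) m i = u s i"
    using nn_hidden_locally_surjective[OF cont inj dims inv lim] by blast
  show ?thesis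
    using X_eq eventually_in_cube[OF y X]
  proof eventually_elim
    case (elim s)
    have "nn_hidden \<sigma> ds W B (X s) m i = u s i" for i
    proof (cases "i < n")
      case False
      then show ?thesis
        using nn_hidden_beyond_width[of "X s" a b ds m i] elim \<open>ds ! 0 = n\<close> \<open>ds ! m = n\<close> u by simp
    qed (use elim in auto)
    then show ?case by (intro rev_image_eqI[OF elim(2)]) (simp add: fun_eq_iff)
  qed
qed

section \<open>Boundary domination\<close>

lemma last_point_on_ray:
  fixes z :: "real \<Rightarrow> 'a::topological_space"
  assumes K: "closed K" and z: "continuous_on UNIV z" "z 0 \<in> K"
    and bdd: "bdd_above {s. 0 \<le> s \<and> z s \<in> K}"
  obtains \<tau> where "0 \<le> \<tau>" "z \<tau> \<in> K" "\<And>s. \<tau> < s \<Longrightarrow> z s \<notin> K"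
proof -
  define S where "S = {s. 0 \<le> s \<and> z s \<in> K}"
  have "S = {0..} \<inter> z -` K" unfolding S_def by auto
  moreover have "closed (z -` K)"
    using z(1) K by (intro continuous_closed_vimage) (auto simp: continuous_on_eq_continuous_at)
  ultimately have "closed S" by auto
  moreover have "0 \<in> S" using z(2) unfolding S_def by simp
  moreover have "bdd_above S" using bdd unfolding S_def .
  ultimately have "Sup S \<in> S" using closed_contains_Sup by blast
  moreover have "z s \<notin> K" if "Sup S < s" for s
    using cSup_upper[OF _ bdd, of s] \<open>Sup S \<in> S\<close> that unfolding S_def by fastforce
  ultimately show ?thesis using that unfolding S_def by blast
qed

lemma bounded_ray_in_compact:
  fixes K :: "('a \<Rightarrow> real) set"
  assumes "compact K" "c \<noteq> 0"
  shows "bounded {s. \<exists>x\<in>K. x i = p + s * c}"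
proof -
  have "compact ((\<lambda>x. x i) ` K)"
    by (intro compact_continuous_image assms(1) continuous_on_subset[OF continuous_on_product_coordinates]) auto
  then have "bounded ((\<lambda>x. x i) ` K)" by (rule compact_imp_bounded)
  then obtain M where M: "\<And>x. x \<in> K \<Longrightarrow> \<bar>x i\<bar> \<le> M"
    unfolding bounded_real by blast
  have "\<bar>s\<bar> \<le> (M + \<bar>p\<bar>) / \<bar>c\<bar>" if "x \<in> K" "x i = p + s * c" for s x
  proof -
    have "\<bar>s\<bar> * \<bar>c\<bar> \<le> M + \<bar>p\<bar>"
      using M[OF that(1)] that(2) by (simp add: abs_mult[symmetric])
    then show ?thesis using assms(2) by (simp add: pos_le_divide_eq)
  qed
  then show ?thesis unfolding bounded_real by blast
qed

lemma nn_hidden_ray_meets_boundary: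
  fixes \<sigma> :: "real \<Rightarrow> real"
  assumes cont: "continuous_on UNIV \<sigma>" and inj: "inj \<sigma>"
    and dims: "\<forall>k\<le>m. ds ! k = n" and inv: "\<forall>k. 1 \<le> k \<longrightarrow> k \<le> m \<longrightarrow> inverse_matrices n (W k) (Q k)"
    and v: "j < n" "v j \<noteq> 0" and c: "c \<in> cube a b n"
  obtains y s where "y \<in> cube_boundary a b n" "0 \<le> s"
    "\<forall>i<n. nn_hidden \<sigma> ds W B y m i = nn_hidden \<sigma> ds W B c m i + s * v i"
proof -
  define h where "h x = nn_hidden \<sigma> ds W B x m" for x
  define z where "z s = (\<lambda>i. if i < n then h c i + s * v i else 0)" for s
  define K where "K = h ` cube a b n"
  have "compact K"
    unfolding K_def h_def
    by (intro compact_continuous_image continuous_on_nn_hidden_layer[OF cont] compact_cube)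
  have h_eq_z: "h x = z s \<longleftrightarrow> (\<forall>i<n. h x i = h c i + s * v i)" if "x \<in> cube a b n" for x s
    using nn_hidden_beyond_width[of x a b ds m] dims that unfolding z_def h_def
    by (auto simp: fun_eq_iff)
  have "continuous_on UNIV z"
    unfolding z_def
  proof (intro continuous_on_coordinatewise_then_product)
    show "continuous_on UNIV (\<lambda>s. if i < n then h c i + s * v i else 0)" for i
      by (cases "i < n") (auto intro!: continuous_intros)
  qed
  moreover have "z 0 \<in> K" using h_eq_z[OF c, of 0] c unfolding K_def by force
  moreover have "{s. 0 \<le> s \<and> z s \<in> K} \<subseteq> {s. \<exists>x\<in>K. x j = h c j + s * v j}"
  proof (intro subsetI CollectI)
    fix s assume "s \<in> {s. 0 \<le> s \<and> z s \<in> K}"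
    moreover have "z s j = h c j + s * v j" using v(1) unfolding z_def by simp
    ultimately show "\<exists>x\<in>K. x j = h c j + s * v j" by blast
  qed
  then have "bdd_above {s. 0 \<le> s \<and> z s \<in> K}"
    using bounded_ray_in_compact[OF \<open>compact K\<close> v(2)] by (meson bounded_subset bounded_imp_bdd_above)
  ultimately obtain \<tau> where \<tau>: "0 \<le> \<tau>" "z \<tau> \<in> K" "\<And>s. \<tau> < s \<Longrightarrow> z s \<notin> K"
    using last_point_on_ray[OF compact_imp_closed[OF \<open>compact K\<close>]] by blast
  then obtain y where y: "y \<in> cube a b n" "h y = z \<tau>" unfolding K_def by auto
  have "y \<in> cube_boundary a b n"
  proof (rule ccontr)
    assume "y \<notin> cube_boundary a b n"
    then have interior: "\<forall>i<n. a < y i \<and> y i < b"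
      using y(1) by (auto simp: cube_boundary_def cube_def less_le)
    have "\<forall>i<n. ((\<lambda>s. z s i) \<longlongrightarrow> z \<tau> i) (at_right \<tau>)"
      unfolding z_def by (auto intro!: tendsto_eq_intros)
    then have lim: "\<forall>i<n. ((\<lambda>s. z s i) \<longlongrightarrow> nn_hidden \<sigma> ds W B y m i) (at_right \<tau>)"
      using y(2) unfolding h_def by simp
    have "\<forall>\<^sub>F s in at_right \<tau>. z s \<in> K"
      unfolding K_def h_def
      by (rule eventually_in_nn_hidden_image[OF cont inj dims inv interior lim]) (simp add: z_def)
    with eventually_at_right_less have "\<forall>\<^sub>F s in at_right \<tau>. \<tau> < s \<and> z s \<in> K"
      by (rule eventually_conj)
    then obtain s where "\<tau> < s" "z s \<in> K"
      using eventually_happens'[OF trivial_limit_at_right_real] by blast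
    then show False using \<tau>(3) by blast
  qed
  then show ?thesis using that \<tau>(1) h_eq_z[OF y(1)] y(2) unfolding h_def by blast
qed

definition narrow_shape :: "nat \<Rightarrow> nat list \<Rightarrow> bool" where
  "narrow_shape n ds \<longleftrightarrow> 2 \<le> length ds \<and> ds ! 0 = n \<and> 0 < n \<and> 0 < ds ! (length ds - 1) \<and>
     (\<forall>k. 1 \<le> k \<longrightarrow> k < length ds - 1 \<longrightarrow> ds ! k \<le> n)"

lemma invertible_prefix:
  assumes "narrow_shape n ds"
  obtains m Q where "m < length ds - 1" "\<forall>k\<le>m. ds ! k = n"
    "\<forall>k. 1 \<le> k \<longrightarrow> k \<le> m \<longrightarrow> inverse_matrices n (W k) (Q k)"
    "Suc m < length ds - 1 \<Longrightarrow>
       \<exists>v. (\<exists>i<n. v i \<noteq> 0) \<and> (\<forall>i<ds ! Suc m. (\<Sum>l<n. W (Suc m) i l * v l) = 0)"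
proof -
  define P where "P m \<longleftrightarrow> m < length ds - 1 \<and> (\<forall>k\<le>m. ds ! k = n) \<and>
    (\<forall>k. 1 \<le> k \<longrightarrow> k \<le> m \<longrightarrow> (\<exists>Q. inverse_matrices n (W k) Q))" for m
  have "P 0" using assms unfolding P_def narrow_shape_def by auto
  then obtain m where "P m" and greatest: "\<And>m'. P m' \<Longrightarrow> m' \<le> m"
    using ex_has_greatest_nat[of P 0 id "length ds - 1"] unfolding P_def by auto
  then have "\<forall>k. \<exists>Q. 1 \<le> k \<longrightarrow> k \<le> m \<longrightarrow> inverse_matrices n (W k) Q"
    unfolding P_def by blast
  then obtain Q where Q: "\<forall>k. 1 \<le> k \<longrightarrow> k \<le> m \<longrightarrow> inverse_matrices n (W k) (Q k)"
    by metis
  have "\<exists>v. (\<exists>i<n. v i \<noteq> 0) \<and> (\<forall>i<ds ! Suc m. (\<Sum>l<n. W (Suc m) i l * v l) = 0)"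
    if "Suc m < length ds - 1"
  proof -
    have "\<not> P (Suc m)" using greatest by fastforce
    then have "\<not> (ds ! Suc m = n \<and> (\<exists>Q. inverse_matrices n (W (Suc m)) Q))"
      using \<open>P m\<close> that unfolding P_def by (auto simp: le_Suc_eq)
    moreover have "ds ! Suc m \<le> n" using assms that unfolding narrow_shape_def by auto
    ultimately show ?thesis using invertible_or_kernel by blast
  qed
  then show ?thesis using that \<open>P m\<close> Q unfolding P_def by blast
qed

lemma nn_eval_eq_of_kernel_step:
  assumes shape: "narrow_shape n ds" and m: "Suc m < length ds - 1" "ds ! m = n"
    and kernel: "\<forall>i<ds ! Suc m. (\<Sum>l<n. W (Suc m) i l * v l) = 0"
    and ray: "\<forall>i<n. nn_hidden \<sigma> ds W B y m i = nn_hidden \<sigma> ds W B c m i + s * v i"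
  shows "nn_eval \<sigma> ds W B y 0 = nn_eval \<sigma> ds W B c 0"
proof -
  have "nn_hidden \<sigma> ds W B y (Suc m) = nn_hidden \<sigma> ds W B c (Suc m)"
    using sum_mult_translate[OF ray] kernel m(2) by (auto simp: fun_eq_iff)
  then have "nn_hidden \<sigma> ds W B y (length ds - 2) = nn_hidden \<sigma> ds W B c (length ds - 2)"
    by (rule nn_hidden_agree_later) (use m(1) in simp)
  then show ?thesis
    using shape unfolding narrow_shape_def by (simp add: nn_eval_first_output)
qed

lemma nn_eval_along_last_hidden_ray:
  assumes "narrow_shape n ds" "ds ! (length ds - 2) = n"
    and "\<forall>i<n. nn_hidden \<sigma> ds W B y (length ds - 2) i =
      nn_hidden \<sigma> ds W B c (length ds - 2) i + s * v i"
  shows "nn_eval \<sigma> ds W B y 0 = nn_eval \<sigma> ds W B c 0 + s * (\<Sum>l<n. W (length ds - 1) 0 l * v l)"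
  using assms sum_mult_translate[OF assms(3)]
  by (simp add: narrow_shape_def nn_eval_first_output)

lemma nn_eval_dominated_by_boundary:
  fixes \<sigma> :: "real \<Rightarrow> real"
  assumes cont: "continuous_on UNIV \<sigma>" and inj: "inj \<sigma>"
    and shape: "narrow_shape n ds" and c: "c \<in> cube a b n"
  obtains y where "y \<in> cube_boundary a b n" "nn_eval \<sigma> ds W B c 0 \<le> nn_eval \<sigma> ds W B y 0"
proof -
  obtain m Q where m: "m < length ds - 1" and dims: "\<forall>k\<le>m. ds ! k = n"
    and inv: "\<forall>k. 1 \<le> k \<longrightarrow> k \<le> m \<longrightarrow> inverse_matrices n (W k) (Q k)"
    and kernel: "Suc m < length ds - 1 \<Longrightarrow>
       \<exists>v. (\<exists>i<n. v i \<noteq> 0) \<and> (\<forall>i<ds ! Suc m. (\<Sum>l<n. W (Suc m) i l * v l) = 0)"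
    using invertible_prefix[OF shape] by blast
  show ?thesis
  proof (cases "Suc m < length ds - 1")
    case True
    then obtain v i0 where v: "i0 < n" "v i0 \<noteq> 0"
      and Wv: "\<forall>i<ds ! Suc m. (\<Sum>l<n. W (Suc m) i l * v l) = 0"
      using kernel by blast
    obtain y s where y: "y \<in> cube_boundary a b n"
      and hy: "\<forall>i<n. nn_hidden \<sigma> ds W B y m i = nn_hidden \<sigma> ds W B c m i + s * v i"
      using nn_hidden_ray_meets_boundary[where v = v and B = B, OF cont inj dims inv v c] by blast
    have "ds ! m = n" using dims by simp
    have "nn_eval \<sigma> ds W B y 0 = nn_eval \<sigma> ds W B c 0"
      by (rule nn_eval_eq_of_kernel_step[where v = v and W = W, OF shape True \<open>ds ! m = n\<close> Wv hy])
    then show ?thesis using that y by simp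
  next
    case False
    \<comment> \<open>All hidden layers are invertible: follow a direction in which the first output does not decrease.\<close>
    let ?w = "W (length ds - 1) 0"
    define v where "v l = (if l = 0 then (if 0 \<le> ?w 0 then 1 else -1) else 0 :: real)" for l :: nat
    have "0 < n" and m_last: "m = length ds - 2"
      using shape m False unfolding narrow_shape_def by auto
    have "v 0 \<noteq> 0" unfolding v_def by simp
    then obtain y s where y: "y \<in> cube_boundary a b n" and "0 \<le> s"
      and hy: "\<forall>i<n. nn_hidden \<sigma> ds W B y m i = nn_hidden \<sigma> ds W B c m i + s * v i"
      using nn_hidden_ray_meets_boundary[where v = v and B = B, OF cont inj dims inv \<open>0 < n\<close> _ c]
      by blast
    have "ds ! (length ds - 2) = n" using dims m_last by simp
    moreover have "\<forall>i<n. nn_hidden \<sigma> ds W B y (length ds - 2) i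
        = nn_hidden \<sigma> ds W B c (length ds - 2) i + s * v i"
      using hy m_last by simp
    ultimately have "nn_eval \<sigma> ds W B y 0 = nn_eval \<sigma> ds W B c 0 + s * (\<Sum>l<n. ?w l * v l)"
      by (rule nn_eval_along_last_hidden_ray[OF shape])
    moreover have "(\<Sum>l<n. ?w l * v l) = (\<Sum>l<n. if l = 0 then ?w 0 * v 0 else 0)"
      by (intro sum.cong) (auto simp: v_def)
    then have "(\<Sum>l<n. ?w l * v l) = \<bar>?w 0\<bar>"
      using \<open>0 < n\<close> by (simp add: v_def abs_if)
    ultimately show ?thesis using that y \<open>0 \<le> s\<close> by simp
  qed
qed

text \<open>The slack \<open>\<eta>\<close> is needed only for ReLU, which is not injective.\<close>

definition boundary_dominated :: "(real \<Rightarrow> real) \<Rightarrow> real \<Rightarrow> real \<Rightarrow> nat \<Rightarrow> bool" where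
  "boundary_dominated \<sigma> a b n \<longleftrightarrow>
     (\<forall>ds W B c \<eta>. narrow_shape n ds \<longrightarrow> c \<in> cube a b n \<longrightarrow> 0 < \<eta> \<longrightarrow>
        (\<exists>y\<in>cube_boundary a b n. nn_eval \<sigma> ds W B c 0 \<le> nn_eval \<sigma> ds W B y 0 + \<eta>))"

lemma boundary_dominated_continuous_inj:
  "continuous_on UNIV \<sigma> \<Longrightarrow> inj \<sigma> \<Longrightarrow> boundary_dominated \<sigma> a b n"
  unfolding boundary_dominated_def
  by (meson nn_eval_dominated_by_boundary add_increasing2 less_imp_le)

section \<open>ReLU as a limit of leaky ReLUs\<close>

definition leaky_relu :: "real \<Rightarrow> real \<Rightarrow> real" where
  "leaky_relu \<delta> t = max t (\<delta> * t)"

lemma strict_mono_leaky_relu: "0 < \<delta> \<Longrightarrow> strict_mono (leaky_relu \<delta>)"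
  unfolding strict_mono_def leaky_relu_def by (auto intro: max.strict_coboundedI1 max.strict_coboundedI2)

lemma continuous_on_leaky_relu: "continuous_on UNIV (leaky_relu \<delta>)"
  unfolding leaky_relu_def by (intro continuous_intros)

lemma leaky_relu_dist_relu:
  assumes "0 \<le> \<delta>" "\<delta> \<le> 1"
  shows "\<bar>leaky_relu \<delta> s - max t 0\<bar> \<le> \<bar>s - t\<bar> + \<delta> * \<bar>t\<bar>"
proof -
  have "\<bar>\<delta> * s - \<delta> * t\<bar> \<le> \<bar>s - t\<bar>"
    using assms by (simp add: right_diff_distrib[symmetric] abs_mult mult_left_le_one_le)
  then have "\<bar>leaky_relu \<delta> s - leaky_relu \<delta> t\<bar> \<le> \<bar>s - t\<bar>"
    unfolding leaky_relu_def by (auto simp: max_def abs_le_iff)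
  moreover have "\<bar>leaky_relu \<delta> t - max t 0\<bar> \<le> \<delta> * \<bar>t\<bar>"
    using mult_left_mono[of t 0 \<delta>] mult_left_le_one_le[of "\<bar>t\<bar>" \<delta>] assms
    by (auto simp: leaky_relu_def max_def abs_mult)
  ultimately show ?thesis by linarith
qed

lemma sum_mult_diff_bound:
  fixes w p q :: "nat \<Rightarrow> real"
  assumes "\<forall>l<d. \<bar>p l - q l\<bar> \<le> e"
  shows "\<bar>(\<Sum>l<d. w l * p l) - (\<Sum>l<d. w l * q l)\<bar> \<le> (\<Sum>l<d. \<bar>w l\<bar>) * e"
proof -
  have "\<bar>(\<Sum>l<d. w l * p l) - (\<Sum>l<d. w l * q l)\<bar> = \<bar>\<Sum>l<d. w l * (p l - q l)\<bar>"
    by (simp add: sum_subtractf right_diff_distrib)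
  also have "\<dots> \<le> (\<Sum>l<d. \<bar>w l * (p l - q l)\<bar>)"
    by (rule sum_abs)
  also have "\<dots> \<le> (\<Sum>l<d. \<bar>w l\<bar> * e)"
    using assms by (intro sum_mono) (auto simp: abs_mult intro: mult_left_mono)
  finally show ?thesis by (simp add: sum_distrib_right)
qed

lemma leaky_relu_neuron_close:
  fixes w p q :: "nat \<Rightarrow> real"
  assumes \<delta>: "0 < \<delta>" "\<delta> < 1" and "0 \<le> C"
    and "\<forall>l<d. \<bar>p l - q l\<bar> \<le> \<delta> * C" "(\<Sum>l<d. \<bar>w l\<bar>) \<le> R" "\<bar>(\<Sum>l<d. w l * q l) + e\<bar> \<le> T"
  shows "\<bar>leaky_relu \<delta> ((\<Sum>l<d. w l * p l) + e) - max ((\<Sum>l<d. w l * q l) + e) 0\<bar> \<le> \<delta> * (R * C + T)"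
proof -
  have "\<bar>(\<Sum>l<d. w l * p l) - (\<Sum>l<d. w l * q l)\<bar> \<le> (\<Sum>l<d. \<bar>w l\<bar>) * (\<delta> * C)"
    using sum_mult_diff_bound assms(4) by blast
  also have "\<dots> \<le> R * (\<delta> * C)"
    using assms(3,5) \<delta> by (intro mult_right_mono) auto
  finally have "\<bar>(\<Sum>l<d. w l * p l) - (\<Sum>l<d. w l * q l)\<bar> \<le> \<delta> * (R * C)" by (simp add: algebra_simps)
  moreover have "\<delta> * \<bar>(\<Sum>l<d. w l * q l) + e\<bar> \<le> \<delta> * T"
    using assms(6) \<delta> by (intro mult_left_mono) auto
  moreover have "\<bar>leaky_relu \<delta> ((\<Sum>l<d. w l * p l) + e) - max ((\<Sum>l<d. w l * q l) + e) 0\<bar>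
      \<le> \<bar>(\<Sum>l<d. w l * p l) - (\<Sum>l<d. w l * q l)\<bar> + \<delta> * \<bar>(\<Sum>l<d. w l * q l) + e\<bar>"
    using leaky_relu_dist_relu[of \<delta> "(\<Sum>l<d. w l * p l) + e" "(\<Sum>l<d. w l * q l) + e"] \<delta>
    by simp
  ultimately show ?thesis by (simp add: distrib_left)
qed

lemma nn_hidden_leaky_relu_close:
  "\<exists>C\<ge>0. \<forall>\<delta> x i. 0 < \<delta> \<longrightarrow> \<delta> < 1 \<longrightarrow> x \<in> cube a b n \<longrightarrow>
     \<bar>nn_hidden (leaky_relu \<delta>) ds W B x k i - nn_hidden (\<lambda>t. max t 0) ds W B x k i\<bar> \<le> \<delta> * C"
proof (induction k)
  case (Suc k)
  then obtain C where "0 \<le> C" and IH: "\<And>\<delta> x i. 0 < \<delta> \<Longrightarrow> \<delta> < 1 \<Longrightarrow> x \<in> cube a b n \<Longrightarrow>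
     \<bar>nn_hidden (leaky_relu \<delta>) ds W B x k i - nn_hidden (\<lambda>t. max t 0) ds W B x k i\<bar> \<le> \<delta> * C"
    by blast
  define t where "t x i = (\<Sum>l<ds ! k. W (Suc k) i l * nn_hidden (\<lambda>t. max t 0) ds W B x k l) + B (Suc k) i"
    for x i
  define R where "R = (\<Sum>i<ds ! Suc k. \<Sum>l<ds ! k. \<bar>W (Suc k) i l\<bar>)"
  have "continuous_on (cube a b n) (\<lambda>x. \<Sum>i<ds ! Suc k. \<bar>t x i\<bar>)"
    unfolding t_def
    by (intro continuous_intros continuous_on_subset[OF continuous_on_nn_hidden subset_UNIV])
  then have "bounded ((\<lambda>x. \<Sum>i<ds ! Suc k. \<bar>t x i\<bar>) ` cube a b n)"
    using compact_cube by (intro compact_imp_bounded compact_continuous_image)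
  then obtain T where "\<forall>y\<in>(\<lambda>x. \<Sum>i<ds ! Suc k. \<bar>t x i\<bar>) ` cube a b n. \<bar>y\<bar> \<le> T"
    unfolding bounded_real by blast
  then have T: "\<And>x. x \<in> cube a b n \<Longrightarrow> (\<Sum>i<ds ! Suc k. \<bar>t x i\<bar>) \<le> T"
    by fastforce
  have "\<bar>nn_hidden (leaky_relu \<delta>) ds W B x (Suc k) i - nn_hidden (\<lambda>t. max t 0) ds W B x (Suc k) i\<bar>
      \<le> \<delta> * (R * C + \<bar>T\<bar>)" if \<delta>: "0 < \<delta>" "\<delta> < 1" and x: "x \<in> cube a b n" for \<delta> x i
  proof (cases "i < ds ! Suc k")
    case True
    have "(\<Sum>l<ds ! k. \<bar>W (Suc k) i l\<bar>) \<le> R"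
      unfolding R_def using True
      by (intro member_le_sum[where f="\<lambda>i. \<Sum>l<ds ! k. \<bar>W (Suc k) i l\<bar>"]) auto
    moreover have "\<bar>t x i\<bar> \<le> \<bar>T\<bar>"
      using T[OF x] member_le_sum[of i "{..<ds ! Suc k}" "\<lambda>i. \<bar>t x i\<bar>"] True by auto
    ultimately show ?thesis
      using leaky_relu_neuron_close[OF \<delta> \<open>0 \<le> C\<close>] IH[OF \<delta> x] True by (simp add: t_def)
  qed (use \<delta> \<open>0 \<le> C\<close> sum_nonneg[of _ "\<lambda>i. \<Sum>l<ds ! k. \<bar>W (Suc k) i l\<bar>"] in \<open>simp add: R_def\<close>)
  moreover have "0 \<le> R * C + \<bar>T\<bar>"
    unfolding R_def using \<open>0 \<le> C\<close> by (simp add: sum_nonneg)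
  ultimately show ?case by blast
qed auto

lemma nn_eval_leaky_relu_close:
  assumes "0 < \<eta>"
  obtains \<delta> where "0 < \<delta>" "\<forall>x\<in>cube a b n.
    \<bar>nn_eval (leaky_relu \<delta>) ds W B x 0 - nn_eval (\<lambda>t. max t 0) ds W B x 0\<bar> \<le> \<eta>"
proof -
  define L where "L = length ds - 1"
  obtain C where "0 \<le> C" and C: "\<And>\<delta> x i. 0 < \<delta> \<Longrightarrow> \<delta> < 1 \<Longrightarrow> x \<in> cube a b n \<Longrightarrow>
     \<bar>nn_hidden (leaky_relu \<delta>) ds W B x (L - 1) i - nn_hidden (\<lambda>t. max t 0) ds W B x (L - 1) i\<bar>
       \<le> \<delta> * C"
    using nn_hidden_leaky_relu_close by blast
  define R where "R = (\<Sum>l<ds ! (L - 1). \<bar>W L 0 l\<bar>)"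
  define \<delta> where "\<delta> = min (1/2) (\<eta> / (R * C + 1))"
  have "0 \<le> R" unfolding R_def by (simp add: sum_nonneg)
  then have "0 < R * C + 1" using \<open>0 \<le> C\<close> by (simp add: add_nonneg_pos)
  then have \<delta>: "0 < \<delta>" "\<delta> < 1" "\<delta> * (R * C + 1) \<le> \<eta>"
    unfolding \<delta>_def using assms by (auto simp: min_def pos_le_divide_eq)
  have "\<bar>nn_eval (leaky_relu \<delta>) ds W B x 0 - nn_eval (\<lambda>t. max t 0) ds W B x 0\<bar> \<le> \<eta>"
    if "x \<in> cube a b n" for x
  proof -
    have "\<bar>nn_eval (leaky_relu \<delta>) ds W B x 0 - nn_eval (\<lambda>t. max t 0) ds W B x 0\<bar> \<le> R * (\<delta> * C)"
      using sum_mult_diff_bound[of _ _ _ "\<delta> * C" "W L 0"] C[OF \<delta>(1,2) that] \<open>0 \<le> R\<close> \<open>0 \<le> C\<close> \<delta>(1)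
      unfolding nn_eval_def Let_def L_def[symmetric] R_def by simp
    also have "\<dots> \<le> \<eta>" using \<delta>(1,3) by (simp add: algebra_simps)
    finally show ?thesis .
  qed
  then show ?thesis using that \<delta>(1) by blast
qed

lemma boundary_dominated_relu: "boundary_dominated (\<lambda>t. max t 0) a b n"
  unfolding boundary_dominated_def
proof (intro allI impI)
  fix ds W B c and \<eta> :: real
  assume shape: "narrow_shape n ds" and c: "c \<in> cube a b n" and "0 < \<eta>"
  then have "0 < \<eta> / 2" by simp
  then obtain \<delta> where "0 < \<delta>" and close: "\<forall>x\<in>cube a b n.
    \<bar>nn_eval (leaky_relu \<delta>) ds W B x 0 - nn_eval (\<lambda>t. max t 0) ds W B x 0\<bar> \<le> \<eta> / 2"
    by (rule nn_eval_leaky_relu_close)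
  obtain y where y: "y \<in> cube_boundary a b n"
    and "nn_eval (leaky_relu \<delta>) ds W B c 0 \<le> nn_eval (leaky_relu \<delta>) ds W B y 0"
    using nn_eval_dominated_by_boundary[OF continuous_on_leaky_relu
        strict_mono_imp_inj_on[OF strict_mono_leaky_relu[OF \<open>0 < \<delta>\<close>]] shape c] by blast
  moreover have "y \<in> cube a b n" using y unfolding cube_boundary_def by blast
  moreover have "\<bar>nn_eval (leaky_relu \<delta>) ds W B c 0 - nn_eval (\<lambda>t. max t 0) ds W B c 0\<bar> \<le> \<eta> / 2"
    "\<bar>nn_eval (leaky_relu \<delta>) ds W B y 0 - nn_eval (\<lambda>t. max t 0) ds W B y 0\<bar> \<le> \<eta> / 2"
    using close c \<open>y \<in> cube a b n\<close> by blast+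
  ultimately have "nn_eval (\<lambda>t. max t 0) ds W B c 0 \<le> nn_eval (\<lambda>t. max t 0) ds W B y 0 + \<eta>"
    by linarith
  then show "\<exists>y\<in>cube_boundary a b n.
      nn_eval (\<lambda>t. max t 0) ds W B c 0 \<le> nn_eval (\<lambda>t. max t 0) ds W B y 0 + \<eta>"
    using y by blast
qed

section \<open>Non-approximation\<close>

lemma abs_le_vec_norm: "i < d \<Longrightarrow> \<bar>v i\<bar> \<le> vec_norm d v"
  unfolding vec_norm_def
  by (metis finite_lessThan lessThan_iff member_le_sum real_sqrt_abs real_sqrt_le_mono zero_le_power2)

lemma is_nn_fun_narrow_shape:
  assumes "is_nn_fun \<sigma> n dout w F" "w \<le> n"
  obtains ds W B where "narrow_shape n ds" "F = nn_eval \<sigma> ds W B"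
proof -
  obtain ds W B where len: "2 \<le> length ds" and "ds ! 0 = n" and pos: "\<forall>d\<in>set ds. 0 < d"
    and width: "Max (set (tl ds)) \<le> w" and F: "F = nn_eval \<sigma> ds W B"
    using assms(1) unfolding is_nn_fun_def by blast
  have "ds ! k \<le> n" if "1 \<le> k" "k < length ds" for k
  proof -
    have "tl ds ! (k - 1) = ds ! k" "k - 1 < length (tl ds)"
      using that by (simp_all add: nth_tl)
    then have "ds ! k \<in> set (tl ds)" by (metis nth_mem)
    then show ?thesis using Max_ge[OF List.finite_set, of "ds ! k" "tl ds"] width assms(2) by linarith
  qed
  moreover have "0 < ds ! 0" "0 < ds ! (length ds - 1)"
  proof -
    have "ds ! 0 \<in> set ds" "ds ! (length ds - 1) \<in> set ds" using len by (auto intro!: nth_mem)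
    then show "0 < ds ! 0" "0 < ds ! (length ds - 1)" using pos by blast+
  qed
  ultimately have "narrow_shape n ds"
    using len \<open>ds ! 0 = n\<close> unfolding narrow_shape_def by auto
  then show ?thesis using that F by blast
qed

lemma approx_width_first_output:
  fixes g :: "(nat \<Rightarrow> real) \<Rightarrow> real"
  assumes aw: "approx_width \<sigma> a b n dout w" and "1 \<le> dout" and cont: "continuous_on UNIV \<sigma>"
    and g: "continuous_on (cube a b n) g" and "0 < \<epsilon>"
  obtains F where "is_nn_fun \<sigma> n dout w F" "\<forall>x\<in>cube a b n. \<bar>g x - F x 0\<bar> < \<epsilon>"
proof -
  define f where "f x = (\<lambda>i :: nat. if i = 0 then g x else 0)" for x :: "nat \<Rightarrow> real"
  have f: "continuous_on (cube a b n) (\<lambda>x. f x i)" for i :: nat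
    using g unfolding f_def by (cases "i = 0") auto
  then obtain F where F: "is_nn_fun \<sigma> n dout w F"
    and sup: "(SUP x\<in>cube a b n. vec_norm dout (\<lambda>i. f x i - F x i)) < \<epsilon>"
    using aw \<open>0 < \<epsilon>\<close> unfolding approx_width_def by blast
  obtain ds W B where F_eq: "F = nn_eval \<sigma> ds W B" using F unfolding is_nn_fun_def by blast
  have "continuous_on (cube a b n) (\<lambda>x. vec_norm dout (\<lambda>i. f x i - F x i))"
    unfolding vec_norm_def F_eq by (intro continuous_intros f continuous_on_nn_eval[OF cont])
  then have bdd: "bdd_above ((\<lambda>x. vec_norm dout (\<lambda>i. f x i - F x i)) ` cube a b n)"
    by (intro bounded_imp_bdd_above compact_imp_bounded compact_continuous_image compact_cube)
  have "\<bar>g x - F x 0\<bar> < \<epsilon>" if "x \<in> cube a b n" for x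
  proof -
    have "\<bar>g x - F x 0\<bar> \<le> vec_norm dout (\<lambda>i. f x i - F x i)"
      using abs_le_vec_norm[of 0 dout "\<lambda>i. f x i - F x i"] \<open>1 \<le> dout\<close> by (simp add: f_def)
    also have "\<dots> \<le> (SUP x\<in>cube a b n. vec_norm dout (\<lambda>i. f x i - F x i))"
      by (rule cSUP_upper[OF that bdd])
    finally show ?thesis using sup by linarith
  qed
  then show ?thesis using that F by blast
qed

lemma not_approx_width_if_boundary_dominated:
  assumes "a < b" "1 \<le> dout" "w \<le> n" "continuous_on UNIV \<sigma>" "boundary_dominated \<sigma> a b n"
  shows "\<not> approx_width \<sigma> a b n dout w"
proof
  assume aw: "approx_width \<sigma> a b n dout w"
  define g where "g x = (\<Prod>i<n. (x i - a) * (b - x i))" for x :: "nat \<Rightarrow> real"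
  define c where "c i = (if i < n then (a + b) / 2 else 0)" for i :: nat
  have c: "c \<in> cube a b n" using assms(1) unfolding c_def cube_def by auto
  have "0 < g c" unfolding g_def c_def using assms(1) by (intro prod_pos) auto
  have "continuous_on (cube a b n) g"
    unfolding g_def
    by (intro continuous_intros continuous_on_subset[OF continuous_on_product_coordinates]) auto
  then obtain F where "is_nn_fun \<sigma> n dout w F" and close: "\<forall>x\<in>cube a b n. \<bar>g x - F x 0\<bar> < g c / 3"
    using approx_width_first_output[OF aw assms(2,4)] \<open>0 < g c\<close> by (metis divide_pos_pos zero_less_numeral)
  then obtain ds W B where shape: "narrow_shape n ds" and F: "F = nn_eval \<sigma> ds W B"
    using is_nn_fun_narrow_shape assms(3) by blast
  moreover have "0 < g c / 3" using \<open>0 < g c\<close> by simp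
  ultimately obtain y where y: "y \<in> cube_boundary a b n" and "F c 0 \<le> F y 0 + g c / 3"
    using assms(5) c unfolding boundary_dominated_def F by blast
  moreover have "y \<in> cube a b n" "g y = 0"
    using y unfolding cube_boundary_def g_def by (auto intro: prod_zero)
  moreover have "\<bar>g c - F c 0\<bar> < g c / 3" "\<bar>g y - F y 0\<bar> < g c / 3"
    using close c \<open>y \<in> cube a b n\<close> by blast+
  ultimately show False by linarith
qed

lemma enat_less_omega_min:
  assumes "\<And>w. approx_width \<sigma> a b din dout w \<Longrightarrow> din < w"
  shows "enat din < omega_min \<sigma> a b din dout"
proof -
  have "enat (Suc din) \<le> omega_min \<sigma> a b din dout"
    unfolding omega_min_def using assms by (auto intro!: Inf_greatest simp: Suc_le_eq)
  then show ?thesis by (simp add: Suc_ile_eq)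
qed

theorem corollary11:
  fixes \<sigma> :: "real \<Rightarrow> real" and a b :: real and din dout :: nat
  assumes "a < b" and "1 \<le> din" and "1 \<le> dout"
    and "(continuous_on UNIV \<sigma> \<and>
          ((\<forall>s t. s < t \<longrightarrow> \<sigma> s < \<sigma> t) \<or> (\<forall>s t. s < t \<longrightarrow> \<sigma> t < \<sigma> s)))
         \<or> \<sigma> = (\<lambda>t. max t 0)"
  shows "enat din < omega_min \<sigma> a b din dout"
proof -
  have "continuous_on UNIV \<sigma> \<and> boundary_dominated \<sigma> a b din"
    using assms(4)
  proof (elim disjE conjE)
    assume "continuous_on UNIV \<sigma>" "\<forall>s t. s < t \<longrightarrow> \<sigma> s < \<sigma> t"
    then show ?thesis by (metis boundary_dominated_continuous_inj linorder_injI order_less_irrefl)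
  next
    assume "continuous_on UNIV \<sigma>" "\<forall>s t. s < t \<longrightarrow> \<sigma> t < \<sigma> s"
    then show ?thesis by (metis boundary_dominated_continuous_inj linorder_injI order_less_irrefl)
  next
    assume "\<sigma> = (\<lambda>t. max t 0)"
    then show ?thesis using boundary_dominated_relu by (auto intro: continuous_intros)
  qed
  then show ?thesis
    using not_approx_width_if_boundary_dominated[OF assms(1,3)]
    by (intro enat_less_omega_min) (meson not_le)
qed

end
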